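(* Let $v\ne e$ be a boolean permutation. Then no optimal partner $w$ for $v$ satisfies $w\ge v$ in the Bruhat order.
   Context: $\sigma_i=(i,i+1)$; $\ell$ is length; $B(w)$ is the principal Bruhat order ideal of $w$; $e$ is the identity. A permutation is boolean if its reduced words have no repeated letters. For $Q\subseteq\mathfrak{S}_n$ with induced Bruhat order, an almost perfect matching of $Q$ is a chain $\emptyset=Q_0\subset\cdots\subset Q_l=Q$ of coideals (upward-closed subsets of $Q$) with each $Q_i\setminus Q_{i-1}$ a pair $\{x_i,y_i\}$, $x_i<y_i$, $\ell(y_i)=\ell(x_i)+1$, except for exactly one $i$ where it is a singleton $\{z\}$ (the unmatched element). For boolean $v$, $\textsf{ork}(v)$ is the largest $\ell(z)$ over all $w\in\mathfrak{S}_n$ and all almost perfect matchings of $B(v)\cap B(w)$ with unmatched element $z$; an optimal partner of $v$ is a $w$ such that $B(v)\cap B(w)$ has an almost perfect matching whose unmatched element has length $\textsf{ork}(v)$. *)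

theory Defs
  imports "HOL-Combinatorics.Combinatorics"
begin

definition Sym :: "nat \<Rightarrow> (nat \<Rightarrow> nat) set" where
  "Sym n = {p. p permutes {1..n}}"

text \<open>Coxeter length = number of inversions.\<close>
definition len :: "nat \<Rightarrow> (nat \<Rightarrow> nat) \<Rightarrow> nat" where
  "len n p = card {(i, j). 1 \<le> i \<and> i < j \<and> j \<le> n \<and> p j < p i}"

definition sigma :: "nat \<Rightarrow> nat \<Rightarrow> nat" where
  "sigma i = Transposition.transpose i (Suc i)"

definition word_prod :: "nat list \<Rightarrow> nat \<Rightarrow> nat" where
  "word_prod ws = foldr (\<lambda>a acc. sigma a \<circ> acc) ws id"

definition reduced_word :: "nat \<Rightarrow> (nat \<Rightarrow> nat) \<Rightarrow> nat list \<Rightarrow> bool" where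
  "reduced_word n w ws \<longleftrightarrow> set ws \<subseteq> {1..<n} \<and> word_prod ws = w \<and> length ws = len n w"

definition boolean_perm :: "nat \<Rightarrow> (nat \<Rightarrow> nat) \<Rightarrow> bool" where
  "boolean_perm n w \<longleftrightarrow> w \<in> Sym n \<and> (\<forall>ws. reduced_word n w ws \<longrightarrow> distinct ws)"

definition bruhat_step :: "nat \<Rightarrow> ((nat \<Rightarrow> nat) \<times> (nat \<Rightarrow> nat)) set" where
  "bruhat_step n = {(u, u \<circ> Transposition.transpose i j) | u i j.
      u \<in> Sym n \<and> i \<in> {1..n} \<and> j \<in> {1..n} \<and> i \<noteq> j \<and>
      len n u < len n (u \<circ> Transposition.transpose i j)}"

definition bruhat_le :: "nat \<Rightarrow> (nat \<Rightarrow> nat) \<Rightarrow> (nat \<Rightarrow> nat) \<Rightarrow> bool" where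
  "bruhat_le n u w \<longleftrightarrow> u \<in> Sym n \<and> w \<in> Sym n \<and> (u, w) \<in> (bruhat_step n)\<^sup>*"

definition bruhat_less :: "nat \<Rightarrow> (nat \<Rightarrow> nat) \<Rightarrow> (nat \<Rightarrow> nat) \<Rightarrow> bool" where
  "bruhat_less n u w \<longleftrightarrow> bruhat_le n u w \<and> u \<noteq> w"

definition bideal :: "nat \<Rightarrow> (nat \<Rightarrow> nat) \<Rightarrow> (nat \<Rightarrow> nat) set" where
  "bideal n w = {u. bruhat_le n u w}"

definition coideal :: "nat \<Rightarrow> (nat \<Rightarrow> nat) set \<Rightarrow> (nat \<Rightarrow> nat) set \<Rightarrow> bool" where
  "coideal n Q C \<longleftrightarrow> C \<subseteq> Q \<and> (\<forall>x\<in>C. \<forall>y\<in>Q. bruhat_le n x y \<longrightarrow> y \<in> C)"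

text \<open>Q has an almost perfect matching with unmatched element z:
  a chain Qs!0 = {} \<subseteq> ... \<subseteq> Qs!l = Q of coideals whose successive
  differences are covering pairs, except exactly one which is {z}.\<close>
definition apm_unmatched :: "nat \<Rightarrow> (nat \<Rightarrow> nat) set \<Rightarrow> (nat \<Rightarrow> nat) \<Rightarrow> bool" where
  "apm_unmatched n Q z \<longleftrightarrow>
    (\<exists>Qs :: (nat \<Rightarrow> nat) set list. \<exists>l. length Qs = Suc l \<and> Qs ! 0 = {} \<and> Qs ! l = Q \<and>
       (\<forall>i\<le>l. coideal n Q (Qs ! i)) \<and>
       (\<forall>i<l. Qs ! i \<subseteq> Qs ! Suc i) \<and>
       (\<exists>i0<l. Qs ! Suc i0 - Qs ! i0 = {z} \<and>
          (\<forall>i<l. i \<noteq> i0 \<longrightarrow>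
             (\<exists>x y. Qs ! Suc i - Qs ! i = {x, y} \<and> bruhat_less n x y \<and> len n y = len n x + 1))))"

definition ork :: "nat \<Rightarrow> (nat \<Rightarrow> nat) \<Rightarrow> nat" where
  "ork n v = Max {len n z | z w. w \<in> Sym n \<and> apm_unmatched n (bideal n v \<inter> bideal n w) z}"

definition optimal_partner :: "nat \<Rightarrow> (nat \<Rightarrow> nat) \<Rightarrow> (nat \<Rightarrow> nat) \<Rightarrow> bool" where
  "optimal_partner n v w \<longleftrightarrow> w \<in> Sym n \<and>
     (\<exists>z. apm_unmatched n (bideal n v \<inter> bideal n w) z \<and> len n z = ork n v)"

end

theory Submission
  imports Defs
begin

text \<open>If \<open>v \<le> w\<close> then \<open>B(v) \<inter> B(w) = B(v)\<close>, so \<open>B(v)\<close> itself would carry an almost perfect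
  matching and hence have odd cardinality. But \<open>v \<noteq> e\<close> has a right descent \<open>\<sigma>\<^sub>k\<close>, and by the
  lifting property \<open>u \<mapsto> u \<sigma>\<^sub>k\<close> is a fixed-point-free involution of \<open>B(v)\<close>, so \<open>|B(v)|\<close> is
  even.\<close>

definition inversions :: "nat \<Rightarrow> (nat \<Rightarrow> nat) \<Rightarrow> (nat \<times> nat) set" where
  "inversions n p = {(i, j). 1 \<le> i \<and> i < j \<and> j \<le> n \<and> p j < p i}"

lemma len_eq_card_inversions: "len n p = card (inversions n p)"
  by (simp add: len_def inversions_def)

lemma finite_inversions: "finite (inversions n p)"
  by (rule finite_subset[of _ "{1..n} \<times> {1..n}"]) (auto simp: inversions_def)

lemma len_less_len_comp_transpose:
  assumes ab: "1 \<le> a" "a < b" "b \<le> n" and pab: "p a < p b"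
  shows "len n p < len n (p \<circ> Transposition.transpose a b)"
proof -
  define \<tau> where "\<tau> = Transposition.transpose a b"
  define q where "q = p \<circ> \<tau>"
  text \<open>\<open>\<psi>\<close> moves pairs that reach outside \<open>[a, b]\<close> by \<open>\<tau>\<close> and fixes the others; it maps
    inversions of \<open>p\<close> injectively to inversions of \<open>q\<close>, missing \<open>(a, b)\<close>.\<close>
  define \<psi> where "\<psi> = (\<lambda>(i, j). if i < a \<or> b < j then (\<tau> i, \<tau> j) else (i, j))"
  have \<psi>_\<psi>: "\<psi> (\<psi> x) = x" if "x \<in> inversions n p" for x
    using that ab unfolding \<psi>_def \<tau>_def inversions_def by (auto simp: transpose_def)
  then have "inj_on \<psi> (inversions n p)"
    by (metis inj_onI)
  moreover have "\<psi> ` inversions n p \<subseteq> inversions n q"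
    using ab pab unfolding \<psi>_def q_def \<tau>_def inversions_def
    by (auto simp: transpose_def split: if_splits)
  moreover have "(a, b) \<in> inversions n q"
    using ab pab by (simp add: inversions_def q_def \<tau>_def)
  moreover have "(a, b) \<notin> \<psi> ` inversions n p"
  proof
    assume "(a, b) \<in> \<psi> ` inversions n p"
    then obtain x where x: "x \<in> inversions n p" "(a, b) = \<psi> x" by auto
    moreover have "\<psi> (a, b) = (a, b)" using ab by (simp add: \<psi>_def)
    ultimately show False using \<psi>_\<psi> pab by (auto simp: inversions_def)
  qed
  ultimately have "card (inversions n p) < card (inversions n q)"
    by (metis card_image finite_inversions psubsetI psubset_card_mono)
  then show ?thesis by (simp add: len_eq_card_inversions q_def \<tau>_def)
qed

lemma len_less_len_comp_transpose_iff:
  assumes p: "p permutes {1..n}" and ab: "a \<in> {1..n}" "b \<in> {1..n}" "a < b"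
  shows "len n p < len n (p \<circ> Transposition.transpose a b) \<longleftrightarrow> p a < p b"
proof
  assume "p a < p b"
  then show "len n p < len n (p \<circ> Transposition.transpose a b)"
    using len_less_len_comp_transpose ab by auto
next
  assume less: "len n p < len n (p \<circ> Transposition.transpose a b)"
  show "p a < p b"
  proof (rule ccontr)
    assume "\<not> p a < p b"
    moreover have "p a \<noteq> p b" using p ab by (metis permutes_inj injD less_irrefl)
    ultimately have "(p \<circ> Transposition.transpose a b) a < (p \<circ> Transposition.transpose a b) b"
      by simp
    then have "len n (p \<circ> Transposition.transpose a b) < len n p"
      using len_less_len_comp_transpose[of a b n "p \<circ> Transposition.transpose a b"] ab
      by (simp add: comp_assoc)
    with less show False by linarith
  qed
qed

lemma permutes_descent_exists:
  assumes v: "v permutes {1..n}" and "v \<noteq> id"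
  obtains k where "1 \<le> k" "Suc k \<le> n" "v (Suc k) < v k"
proof (rule ccontr)
  note descent = that
  assume no_descent: "\<not> thesis"
  have ascent: "v k < v (Suc k)" if "1 \<le> k" "Suc k \<le> n" for k
    using that v no_descent descent by (metis injD linorder_neqE_nat n_not_Suc_n permutes_inj)
  have le: "i \<le> v i" if "i \<in> {1..n}" for i
    using that
  proof (induction i)
    case (Suc i)
    show ?case
    proof (cases "i = 0")
      case True
      then show ?thesis using Suc.prems v
        by (metis One_nat_def atLeastAtMost_iff permutes_in_image)
    next
      case False
      then show ?thesis using Suc ascent[of i] by simp
    qed
  qed simp
  obtain x where "v x \<noteq> x" using \<open>v \<noteq> id\<close> by (metis eq_id_iff)
  moreover from this have "x \<in> {1..n}" using v by (meson permutes_not_in)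
  ultimately have "(\<Sum>i\<in>{1..n}. i) < (\<Sum>i\<in>{1..n}. v i)"
    using le by (intro sum_strict_mono_ex1) (auto intro!: bexI[of _ x] le_neq_implies_less)
  moreover have "(\<Sum>i\<in>{1..n}. v i) = (\<Sum>i\<in>{1..n}. i)"
    using sum.reindex_bij_betw[OF permutes_imp_bij[OF v], of id] by simp
  ultimately show False by simp
qed

lemma sigma_permutes: "1 \<le> k \<Longrightarrow> Suc k \<le> n \<Longrightarrow> sigma k permutes {1..n}"
  unfolding sigma_def by (rule permutes_swap_id) auto

lemma comp_sigma_in_Sym:
  assumes "u \<in> Sym n" "1 \<le> k" "Suc k \<le> n"
  shows "u \<circ> sigma k \<in> Sym n"
  using permutes_compose[OF sigma_permutes[OF assms(2,3)]] assms(1) by (simp add: Sym_def)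

lemma comp_sigma_neq: "u permutes {1..n} \<Longrightarrow> u \<circ> sigma k \<noteq> u"
  by (metis comp_apply n_not_Suc_n permutes_inj_on inj_onD UNIV_I sigma_def transpose_apply_first)

lemma bruhat_stepI:
  assumes "u \<in> Sym n" "i \<in> {1..n}" "j \<in> {1..n}" "i < j" "u i < u j"
  shows "(u, u \<circ> Transposition.transpose i j) \<in> bruhat_step n"
proof -
  have "len n u < len n (u \<circ> Transposition.transpose i j)"
    using assms by (intro len_less_len_comp_transpose) auto
  then show ?thesis
    unfolding bruhat_step_def using assms by blast
qed

lemma bruhat_stepE:
  assumes "(y, z) \<in> bruhat_step n"
  obtains i j where "y \<in> Sym n" "i \<in> {1..n}" "j \<in> {1..n}" "i < j" "y i < y j"
    "z = y \<circ> Transposition.transpose i j"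
proof -
  obtain i j where y: "y \<in> Sym n" and ij: "i \<in> {1..n}" "j \<in> {1..n}" "i \<noteq> j"
    and z: "z = y \<circ> Transposition.transpose i j"
    and less: "len n y < len n (y \<circ> Transposition.transpose i j)"
    using assms unfolding bruhat_step_def by blast
  have p: "y permutes {1..n}" using y by (simp add: Sym_def)
  show thesis
  proof (cases "i < j")
    case True
    then show thesis using that y ij z less len_less_len_comp_transpose_iff[OF p] by blast
  next
    case False
    then have "j < i" using ij by simp
    moreover from this have "y j < y i"
      using len_less_len_comp_transpose_iff[OF p, of j i] ij less by (simp add: transpose_commute)
    ultimately show thesis
      using that[of j i] y ij z by (simp add: transpose_commute)
  qed
qed

text \<open>Right multiplication by \<open>\<sigma>\<^sub>k\<close> maps a Bruhat step \<open>y \<rightarrow> y t\<close> with \<open>t \<noteq> \<sigma>\<^sub>k\<close> to the step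
  \<open>y \<sigma>\<^sub>k \<rightarrow> y t \<sigma>\<^sub>k = y \<sigma>\<^sub>k t'\<close>, where \<open>t' = \<sigma>\<^sub>k t \<sigma>\<^sub>k\<close> swaps two positions in the same relative order.\<close>
lemma bruhat_step_comp_sigma:
  assumes step: "(y, z) \<in> bruhat_step n" and "z \<noteq> y \<circ> sigma k"
    and k: "1 \<le> k" "Suc k \<le> n"
  shows "(y \<circ> sigma k, z \<circ> sigma k) \<in> bruhat_step n"
proof -
  obtain i j where y: "y \<in> Sym n" and ij: "i \<in> {1..n}" "j \<in> {1..n}" "i < j"
    and yij: "y i < y j" and z: "z = y \<circ> Transposition.transpose i j"
    using step by (rule bruhat_stepE)
  have "(i, j) \<noteq> (k, Suc k)"
    using \<open>z \<noteq> y \<circ> sigma k\<close> z by (auto simp: sigma_def)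
  then have order: "sigma k i < sigma k j"
    using \<open>i < j\<close> by (auto simp: sigma_def transpose_def)
  have conj: "Transposition.transpose i j \<circ> sigma k
      = sigma k \<circ> Transposition.transpose (sigma k i) (sigma k j)"
    using transpose_comp_eq[of "sigma k" i j] by (simp add: sigma_def)
  have "(y \<circ> sigma k, y \<circ> sigma k \<circ> Transposition.transpose (sigma k i) (sigma k j))
      \<in> bruhat_step n"
    using comp_sigma_in_Sym[OF y k] ij k order yij
    by (intro bruhat_stepI) (auto simp: sigma_def transpose_def)
  then show ?thesis
    by (simp add: z comp_assoc conj)
qed

lemma bruhat_step_comp_sigma_descent:
  assumes v: "v \<in> Sym n" and k: "1 \<le> k" "Suc k \<le> n" and descent: "v (Suc k) < v k"
  shows "(v \<circ> sigma k, v) \<in> bruhat_step n"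
proof -
  have "(v \<circ> sigma k, v \<circ> sigma k \<circ> Transposition.transpose k (Suc k)) \<in> bruhat_step n"
    using comp_sigma_in_Sym[OF v k] k descent by (intro bruhat_stepI) (auto simp: sigma_def)
  then show ?thesis by (simp add: sigma_def comp_assoc)
qed

lemma bruhat_le_comp_sigma_descent:
  assumes "bruhat_le n u v" and k: "1 \<le> k" "Suc k \<le> n" and descent: "v (Suc k) < v k"
  shows "bruhat_le n (u \<circ> sigma k) v"
proof -
  have v: "v \<in> Sym n" and uv: "(u, v) \<in> (bruhat_step n)\<^sup>*"
    using assms(1) by (auto simp: bruhat_le_def)
  from uv have "(u \<circ> sigma k, v) \<in> (bruhat_step n)\<^sup>*"
  proof (induction rule: converse_rtrancl_induct)
    case base
    show ?case using bruhat_step_comp_sigma_descent[OF v k descent] by blast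
  next
    case (step y z)
    show ?case
    proof (cases "z = y \<circ> sigma k")
      case True
      with step.hyps(2) show ?thesis by blast
    next
      case False
      then have "(y \<circ> sigma k, z \<circ> sigma k) \<in> bruhat_step n"
        using bruhat_step_comp_sigma step.hyps(1) k by blast
      then show ?thesis using step.IH by (rule converse_rtrancl_into_rtrancl)
    qed
  qed
  moreover have "u \<circ> sigma k \<in> Sym n"
    using assms(1) k comp_sigma_in_Sym by (auto simp: bruhat_le_def)
  ultimately show ?thesis using v by (simp add: bruhat_le_def)
qed

lemma even_card_fixpoint_free_involution:
  assumes "finite A" and maps: "\<And>x. x \<in> A \<Longrightarrow> f x \<in> A"
    and involution: "\<And>x. x \<in> A \<Longrightarrow> f (f x) = x" and no_fixpoint: "\<And>x. x \<in> A \<Longrightarrow> f x \<noteq> x"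
  shows "even (card A)"
proof -
  define C where "C = (\<lambda>x. {x, f x}) ` A"
  have "\<Union>C = A" using maps by (auto simp: C_def)
  moreover have "pairwise disjnt C"
    unfolding C_def pairwise_def disjnt_def using involution by auto metis+
  moreover have card_pair: "card P = 2" if "P \<in> C" for P
    using that no_fixpoint by (fastforce simp: C_def card_2_iff)
  ultimately have "card A = (\<Sum>P\<in>C. card P)"
    using card_Union_disjoint[of C] by (auto simp: C_def)
  also have "\<dots> = 2 * card C"
    using card_pair by simp
  finally show ?thesis by simp
qed

lemma finite_bideal: "finite (bideal n v)"
proof (rule finite_subset)
  show "bideal n v \<subseteq> Sym n" by (auto simp: bideal_def bruhat_le_def)
  show "finite (Sym n)" by (simp add: Sym_def finite_permutations)
qed

lemma bideal_mono: "bruhat_le n v w \<Longrightarrow> bideal n v \<subseteq> bideal n w"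
  by (auto simp: bideal_def bruhat_le_def)

lemma even_card_bideal:
  assumes v: "v \<in> Sym n" and "v \<noteq> id"
  shows "even (card (bideal n v))"
proof -
  obtain k where k: "1 \<le> k" "Suc k \<le> n" "v (Suc k) < v k"
    using permutes_descent_exists v \<open>v \<noteq> id\<close> by (metis Sym_def mem_Collect_eq)
  show ?thesis
  proof (rule even_card_fixpoint_free_involution[where f = "\<lambda>u. u \<circ> sigma k"])
    show "finite (bideal n v)" by (rule finite_bideal)
    show "u \<circ> sigma k \<in> bideal n v" if "u \<in> bideal n v" for u
      using that bruhat_le_comp_sigma_descent k by (simp add: bideal_def)
    show "u \<circ> sigma k \<circ> sigma k = u" for u
      by (simp add: sigma_def comp_assoc)
    show "u \<circ> sigma k \<noteq> u" if "u \<in> bideal n v" for u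
      using that comp_sigma_neq by (auto simp: bideal_def bruhat_le_def Sym_def)
  qed
qed

lemma odd_card_if_apm_unmatched:
  assumes "finite Q" and "apm_unmatched n Q z"
  shows "odd (card Q)"
proof -
  obtain Qs l i0 where "Qs ! 0 = {}" and "Qs ! l = Q"
    and coideals: "\<forall>i\<le>l. coideal n Q (Qs ! i)" and chain: "\<forall>i<l. Qs ! i \<subseteq> Qs ! Suc i"
    and i0: "i0 < l" "Qs ! Suc i0 - Qs ! i0 = {z}"
    and pairs: "\<forall>i<l. i \<noteq> i0 \<longrightarrow> (\<exists>x y. Qs ! Suc i - Qs ! i = {x, y} \<and> bruhat_less n x y \<and>
      len n y = len n x + 1)"
    using assms(2) unfolding apm_unmatched_def by (elim exE conjE) (rule that; assumption)
  have parity: "even (card (Qs ! i)) \<longleftrightarrow> i \<le> i0" if "i \<le> l" for i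
    using that
  proof (induction i)
    case 0
    then show ?case using \<open>Qs ! 0 = {}\<close> by simp
  next
    case (Suc i)
    have "Qs ! Suc i \<subseteq> Q"
      using coideals Suc.prems by (simp add: coideal_def)
    then have "finite (Qs ! Suc i)"
      using \<open>finite Q\<close> by (rule finite_subset)
    moreover have "Qs ! i \<subseteq> Qs ! Suc i" using chain Suc.prems by simp
    ultimately have "card (Qs ! Suc i) = card (Qs ! i) + card (Qs ! Suc i - Qs ! i)"
      by (metis card_Un_disjoint Diff_disjoint Un_Diff_cancel Un_absorb1 finite_Diff finite_subset)
    moreover have "card (Qs ! Suc i - Qs ! i) = (if i = i0 then 1 else 2)"
    proof (cases "i = i0")
      case False
      then obtain x y where "Qs ! Suc i - Qs ! i = {x, y}" "x \<noteq> y"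
        using pairs Suc.prems by (auto simp: bruhat_less_def Suc_le_eq)
      then show ?thesis using False by simp
    qed (use i0 in simp)
    ultimately show ?case using Suc by (auto split: if_splits)
  qed
  show ?thesis using parity[of l] i0 \<open>Qs ! l = Q\<close> by simp
qed

theorem lemma5p1:
  fixes n :: nat and v w :: "nat \<Rightarrow> nat"
  assumes "boolean_perm n v"
    and "v \<noteq> id"
    and "optimal_partner n v w"
  shows "\<not> bruhat_le n v w"
proof
  assume "bruhat_le n v w"
  then have "bideal n v \<inter> bideal n w = bideal n v" by (auto dest: bideal_mono)
  moreover obtain z where "apm_unmatched n (bideal n v \<inter> bideal n w) z"
    using assms(3) by (auto simp: optimal_partner_def)
  ultimately have "odd (card (bideal n v))"
    using odd_card_if_apm_unmatched finite_bideal by metis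
  moreover have "even (card (bideal n v))"
    using even_card_bideal assms(1,2) by (simp add: boolean_perm_def)
  ultimately show False by simp
qed

end
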